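(* Let $n$ be a positive integer and $k$ an integer with $0\le k\le n$. Then $$e_k\left(\left\{\csc^2\left(\tfrac{(2j-1)\pi}{4n}\right) : j=1,\dots,n\right\}\right) = \frac{n\,(n+k-1)!\,4^k}{(n-k)!\,(2k)!}.$$
   Context: $e_k(\alpha_1,\dots,\alpha_n)$ denotes the degree-$k$ elementary symmetric function of $\alpha_1,\dots,\alpha_n$ (with $e_0=1$). *)

theory Defs
  imports Complex_Main
begin

definition elem_sym :: "nat \<Rightarrow> ('i \<Rightarrow> real) \<Rightarrow> 'i set \<Rightarrow> real" where
  "elem_sym k a I = (\<Sum>S\<in>{S. S \<subseteq> I \<and> card S = k}. \<Prod>i\<in>S. a i)"

definition csc :: "real \<Rightarrow> real" where
  "csc x = 1 / sin x"

end

theory Submission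
  imports Defs "HOL-Computational_Algebra.Polynomial"
begin

text \<open>
  Write \<open>\<theta>\<^sub>j = (2j - 1)\<pi>/(4n)\<close> (\<open>odd_angle n j\<close>). Since \<open>cos (2n t)\<close> is a polynomial
  \<open>P\<^sub>n\<close> (\<open>even_cos_poly n\<close>) of degree \<open>n\<close> in \<open>sin\<^sup>2 t\<close> with constant term 1, and
  \<open>cos (2n \<theta>\<^sub>j) = 0\<close>, the \<open>n\<close> distinct numbers \<open>sin\<^sup>2 \<theta>\<^sub>j\<close> are all the roots of \<open>P\<^sub>n\<close>.
  Hence the \<open>csc\<^sup>2 \<theta>\<^sub>j\<close> are the roots of the reversed polynomial, which is monic, and by
  Vieta the \<open>k\<close>-th coefficient of \<open>P\<^sub>n\<close> is \<open>(-1)\<^sup>k e\<^sub>k(csc\<^sup>2 \<theta>\<^sub>j)\<close>. That coefficient is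
  computed from \<open>P\<^sub>n = (A\<^sub>n + A\<^sub>n\<^sub>-\<^sub>1)/2\<close>, where \<open>A\<^sub>n\<close> (\<open>odd_cos_poly n\<close>) satisfies
  \<open>cos t \<cdot> A\<^sub>n(sin\<^sup>2 t) = cos ((2n + 1) t)\<close> and has the coefficients \<open>C(n + k, 2k) (-4)\<^sup>k\<close>.
\<close>

fun odd_cos_poly :: "nat \<Rightarrow> real poly" where
  "odd_cos_poly 0 = 1"
| "odd_cos_poly (Suc 0) = [:1, -4:]"
| "odd_cos_poly (Suc (Suc n)) = smult 2 ([:1, -2:] * odd_cos_poly (Suc n)) - odd_cos_poly n"

lemma cos_add_cos_diff: "cos (a + b) + cos (a - b) = 2 * cos a * cos (b :: real)"
  by (simp add: cos_add cos_diff)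

lemma odd_cos_poly_sin_sq: "cos t * poly (odd_cos_poly n) (sin t ^ 2) = cos ((2 * real n + 1) * t)"
proof (induction n rule: odd_cos_poly.induct)
  case 1
  then show ?case by simp
next
  case 2
  have "cos t * (1 - 4 * sin t ^ 2) = cos (3 * t)"
    by (simp add: sin_squared_eq cos_treble_cos) (simp add: algebra_simps power3_eq_cube power2_eq_square)
  then show ?case
    by (simp add: mult.commute)
next
  case (3 n)
  have "cos t * poly (odd_cos_poly (Suc (Suc n))) (sin t ^ 2)
      = 2 * cos (2 * t) * (cos t * poly (odd_cos_poly (Suc n)) (sin t ^ 2))
        - cos t * poly (odd_cos_poly n) (sin t ^ 2)"
    unfolding cos_double_sin by (simp add: algebra_simps)
  also have "\<dots> = 2 * cos (2 * t) * cos ((2 * real (Suc n) + 1) * t) - cos ((2 * real n + 1) * t)"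
    by (simp only: 3)
  also have "\<dots> = cos ((2 * real (Suc (Suc n)) + 1) * t)"
    using cos_add_cos_diff[of "(2 * real (Suc n) + 1) * t" "2 * t"] by (simp add: algebra_simps)
  finally show ?case .
qed

lemma choose_add_two_rec:
  "(m + 2 choose (j + 2)) + (m choose (j + 2)) = 2 * (m + 1 choose (j + 2)) + (m choose j)"
  by (simp add: numeral_2_eq_2)

lemma coeff_odd_cos_poly: "coeff (odd_cos_poly n) k = real (n + k choose (2 * k)) * (-4) ^ k"
proof (induction n arbitrary: k rule: odd_cos_poly.induct)
  case 1
  then show ?case by (cases k) (auto simp: binomial_eq_0)
next
  case 2
  then show ?case by (auto simp: coeff_pCons binomial_eq_0 split: nat.split)
next
  case (3 n)
  show ?case
  proof (cases k)
    case 0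
    with 3 show ?thesis by (simp add: mult_pCons_left)
  next
    case (Suc j)
    have "coeff (odd_cos_poly (Suc (Suc n))) k
        = 2 * (coeff (odd_cos_poly (Suc n)) (Suc j) - 2 * coeff (odd_cos_poly (Suc n)) j)
          - coeff (odd_cos_poly n) (Suc j)"
      by (simp add: Suc mult_pCons_left)
    also have "\<dots> = (2 * real (n + Suc j + 1 choose (2 * j + 2)) + real (n + Suc j choose (2 * j))
        - real (n + Suc j choose (2 * j + 2))) * (-4) ^ Suc j"
      using 3 by (simp add: algebra_simps)
    also have "\<dots> = real (n + Suc j + 2 choose (2 * j + 2)) * (-4) ^ Suc j"
      using arg_cong[OF choose_add_two_rec[of "n + Suc j" "2 * j"], of real] by simp
    finally show ?thesis by (simp add: Suc)
  qed
qed

definition even_cos_poly :: "nat \<Rightarrow> real poly" where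
  "even_cos_poly n = smult (1 / 2) (odd_cos_poly n + odd_cos_poly (n - 1))"

lemma even_cos_poly_sin_sq:
  assumes "n \<ge> 1" and "cos t \<noteq> 0"
  shows "poly (even_cos_poly n) (sin t ^ 2) = cos (2 * real n * t)"
proof -
  have "cos t * poly (even_cos_poly n) (sin t ^ 2)
      = (cos t * poly (odd_cos_poly n) (sin t ^ 2) + cos t * poly (odd_cos_poly (n - 1)) (sin t ^ 2)) / 2"
    by (simp add: even_cos_poly_def algebra_simps)
  also have "\<dots> = (cos ((2 * real n + 1) * t) + cos ((2 * real (n - 1) + 1) * t)) / 2"
    by (simp only: odd_cos_poly_sin_sq)
  also have "\<dots> = (cos (2 * real n * t + t) + cos (2 * real n * t - t)) / 2"
    using assms(1) by (simp add: algebra_simps)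
  also have "\<dots> = cos t * cos (2 * real n * t)"
    by (simp only: cos_add_cos_diff) simp
  finally show ?thesis
    using assms(2) by simp
qed

lemma choose_add_choose_pred:
  assumes "k \<le> n" and "n > 0"
  shows "real (n + k choose (2 * k)) + real (n + k - 1 choose (2 * k))
       = 2 * real n * fact (n + k - 1) / (fact (n - k) * fact (2 * k))"
proof -
  define N where "N = n + k"
  have N: "real N > 0" "N - 2 * k = n - k" "2 * k \<le> N"
    using assms by (auto simp: N_def)
  have "real (n - k) * real (N choose (2 * k)) = real N * real (N - 1 choose (2 * k))"
    using arg_cong[OF binomial_absorb_comp[of N "2 * k"], of real] N(2) by simp
  then have "real (N choose (2 * k)) + real (N - 1 choose (2 * k))
      = (1 + real (n - k) / real N) * real (N choose (2 * k))"
    using N(1) by (simp add: field_simps)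
  also have "1 + real (n - k) / real N = 2 * real n / real N"
    using N(1) assms(1) by (simp add: N_def field_simps)
  also have "2 * real n / real N * real (N choose (2 * k))
      = 2 * real n * fact (N - 1) / (fact (n - k) * fact (2 * k))"
    using binomial_fact[where 'a = real, OF N(3)] fact_reduce[where 'a = real, of N] N by (simp add: ac_simps)
  finally show ?thesis
    by (simp add: N_def)
qed

lemma coeff_even_cos_poly:
  assumes "n \<ge> 1"
  shows "coeff (even_cos_poly n) k =
    (if k \<le> n then (-1) ^ k * (real n * fact (n + k - 1) * 4 ^ k / (fact (n - k) * fact (2 * k)))
     else 0)"
proof (cases "k \<le> n")
  case True
  have "(-4 :: real) ^ k = (-1) ^ k * 4 ^ k"
    by (simp flip: power_mult_distrib)
  then have "coeff (even_cos_poly n) k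
      = (-1) ^ k * (4 ^ k * (real (n + k choose (2 * k)) + real (n + k - 1 choose (2 * k))) / 2)"
    using assms by (simp add: even_cos_poly_def coeff_odd_cos_poly field_simps)
  also have "real (n + k choose (2 * k)) + real (n + k - 1 choose (2 * k))
      = 2 * real n * fact (n + k - 1) / (fact (n - k) * fact (2 * k))"
    using choose_add_choose_pred[OF True] assms by simp
  finally show ?thesis
    using True by simp
next
  case False
  then show ?thesis
    using assms by (simp add: even_cos_poly_def coeff_odd_cos_poly binomial_eq_0)
qed

lemma degree_even_cos_poly:
  assumes "n \<ge> 1"
  shows "degree (even_cos_poly n) = n"
proof (rule antisym)
  show "degree (even_cos_poly n) \<le> n"
    by (rule degree_le) (simp add: coeff_even_cos_poly[OF assms])
  show "n \<le> degree (even_cos_poly n)"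
    by (rule le_degree) (use assms in \<open>simp add: coeff_even_cos_poly\<close>)
qed

lemma coeff_prod_linear_elem_sym:
  fixes a :: "'i \<Rightarrow> real"
  assumes "finite I" and "k \<le> card I"
  shows "coeff (\<Prod>i\<in>I. [:- a i, 1:]) (card I - k) = (-1) ^ k * elem_sym k a I"
proof -
  have "(\<Prod>i\<in>I. [:- a i, 1:]) = (\<Prod>i\<in>I. [:- a i:] + [:0, 1:])"
    by simp
  also have "\<dots> = (\<Sum>B\<in>Pow I. (\<Prod>i\<in>B. [:- a i:]) * (\<Prod>i\<in>I - B. [:0, 1:]))"
    by (rule prod_add[OF assms(1)])
  also have "\<dots> = (\<Sum>B\<in>Pow I. monom ((-1) ^ card B * prod a B) (card I - card B))"
  proof (rule sum.cong[OF refl])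
    fix B assume "B \<in> Pow I"
    then have "finite B" "B \<subseteq> I"
      using assms(1) finite_subset by auto
    have factors: "(\<Prod>i\<in>B. [:- a i:]) = [:(-1) ^ card B * prod a B:]"
      "(\<Prod>i\<in>I - B. [:0, 1:]) = monom 1 (card I - card B)"
      using \<open>finite B\<close> \<open>B \<subseteq> I\<close> assms(1)
      by (simp_all add: prod_to_poly prod_uminus monom_altdef card_Diff_subset)
    have "[:c:] * monom 1 d = monom c d" for c :: real and d
      by (simp add: smult_monom)
    then show "(\<Prod>i\<in>B. [:- a i:]) * (\<Prod>i\<in>I - B. [:0, 1:])
        = monom ((-1) ^ card B * prod a B) (card I - card B)"
      by (simp only: factors)
  qed
  also have "coeff \<dots> (card I - k) = (\<Sum>B\<in>Pow I. if card B = k then (-1) ^ k * prod a B else 0)"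
    unfolding coeff_sum
  proof (rule sum.cong[OF refl])
    fix B assume "B \<in> Pow I"
    then have "card B \<le> card I"
      using assms(1) by (simp add: card_mono)
    then show "coeff (monom ((-1) ^ card B * prod a B) (card I - card B)) (card I - k)
        = (if card B = k then (-1) ^ k * prod a B else 0)"
      using assms(2) by auto
  qed
  also have "\<dots> = (\<Sum>B\<in>{B \<in> Pow I. card B = k}. (-1) ^ k * prod a B)"
    by (rule sum.inter_filter[symmetric]) (simp add: assms(1))
  also have "{B \<in> Pow I. card B = k} = {S. S \<subseteq> I \<and> card S = k}"
    by auto
  finally show ?thesis
    by (simp add: elem_sym_def sum_distrib_left)
qed

lemma monic_poly_eq_prod_roots:
  fixes p :: "'a :: idom poly"
  assumes "finite I" and "inj_on x I" and "degree p = card I" and "lead_coeff p = 1"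
    and "\<And>i. i \<in> I \<Longrightarrow> poly p (x i) = 0"
  shows "p = (\<Prod>i\<in>I. [:- x i, 1:])"
proof (rule poly_eqI_degree_lead_coeff[where n = "card I" and A = "x ` I"])
  have degree_prod: "degree (\<Prod>i\<in>I. [:- x i, 1:]) = card I"
    by (subst degree_prod_eq_sum_degree) auto
  then show "degree (\<Prod>i\<in>I. [:- x i, 1:]) \<le> card I"
    by simp
  have "lead_coeff (\<Prod>i\<in>I. [:- x i, 1:]) = 1"
    by (simp add: lead_coeff_prod)
  with assms(3,4) show "coeff p (card I) = coeff (\<Prod>i\<in>I. [:- x i, 1:]) (card I)"
    by (simp only: degree_prod)
  show "degree p \<le> card I"
    using assms(3) by simp
  show "card I \<le> card (x ` I)"
    using assms(2) by (simp add: card_image)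
  fix z assume "z \<in> x ` I"
  then obtain i where "i \<in> I" and "z = x i"
    by blast
  then have "poly (\<Prod>i\<in>I. [:- x i, 1:]) z = 0"
    using assms(1) by (auto simp: poly_prod)
  with assms(5) \<open>i \<in> I\<close> \<open>z = x i\<close> show "poly p z = poly (\<Prod>i\<in>I. [:- x i, 1:]) z"
    by simp
qed

lemma coeff_eq_elem_sym_of_inverse_roots:
  fixes q :: "real poly" and x :: "'i \<Rightarrow> real"
  assumes "finite I" and "degree q = card I" and "coeff q 0 = 1" and "inj_on x I"
    and "\<And>i. i \<in> I \<Longrightarrow> x i \<noteq> 0" and "\<And>i. i \<in> I \<Longrightarrow> poly q (inverse (x i)) = 0"
    and "k \<le> card I"
  shows "coeff q k = (-1) ^ k * elem_sym k x I"
proof -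
  have "reflect_poly q = (\<Prod>i\<in>I. [:- x i, 1:])"
  proof (rule monic_poly_eq_prod_roots[OF assms(1,4)])
    show "degree (reflect_poly q) = card I" and "lead_coeff (reflect_poly q) = 1"
      using assms(2,3) by (simp_all add: coeff_reflect_poly)
    show "poly (reflect_poly q) (x i) = 0" if "i \<in> I" for i
      using assms(5,6) that by (simp add: poly_reflect_poly_nz)
  qed
  moreover have "coeff (reflect_poly q) (card I - k) = coeff q k"
    using assms(2,7) by (simp add: coeff_reflect_poly)
  ultimately have "coeff q k = coeff (\<Prod>i\<in>I. [:- x i, 1:]) (card I - k)"
    by simp
  with assms(1,7) show ?thesis
    by (simp add: coeff_prod_linear_elem_sym)
qed

lemma inj_on_csc_sq: "inj_on (\<lambda>t. csc t ^ 2) {0<..<pi / 2}"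
proof (rule inj_onI)
  fix s t assume s: "s \<in> {0<..<pi / 2}" and t: "t \<in> {0<..<pi / 2}" and "csc s ^ 2 = csc t ^ 2"
  then have "sin s ^ 2 = sin t ^ 2"
    by (simp add: csc_def power_divide)
  moreover have "sin s > 0" "sin t > 0"
    using s t pi_gt_zero by (auto intro!: sin_gt_zero)
  ultimately have "sin s = sin t"
    by (meson less_imp_le power2_eq_iff_nonneg)
  then show "s = t"
    by (rule sin_inj_pi[rotated 4]) (use s t in auto)
qed

lemma inverse_csc_sq: "inverse (csc t ^ 2) = sin t ^ 2"
  by (simp add: csc_def power_divide)

definition odd_angle :: "nat \<Rightarrow> nat \<Rightarrow> real" where
  "odd_angle n j = (2 * real j - 1) * pi / (4 * real n)"

lemma odd_angle_bounds:
  assumes "j \<in> {1..n}"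
  shows "odd_angle n j \<in> {0<..<pi / 2}"
proof -
  have "(2 * real j - 1) * pi < (2 * real n) * pi"
    using assms by (intro mult_strict_right_mono) auto
  then show ?thesis
    using assms by (auto simp: odd_angle_def field_simps)
qed

lemma cos_odd_angle_multiple:
  assumes "j \<in> {1..n}"
  shows "cos (2 * real n * odd_angle n j) = 0"
proof -
  have "2 * real n * odd_angle n j = real (2 * j - 1) * (pi / 2)"
    using assms by (simp add: odd_angle_def of_nat_diff field_simps)
  moreover have "odd (2 * j - 1)"
    using assms by simp
  ultimately show ?thesis
    unfolding cos_zero_iff by blast
qed

lemma even_cos_poly_root_odd_angle:
  assumes "j \<in> {1..n}"
  shows "poly (even_cos_poly n) (sin (odd_angle n j) ^ 2) = 0"
proof -
  have "cos (odd_angle n j) > 0"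
    using odd_angle_bounds[OF assms] by (auto intro: cos_gt_zero)
  with assms show ?thesis
    by (simp add: even_cos_poly_sin_sq cos_odd_angle_multiple)
qed

lemma inj_on_csc_sq_odd_angle: "inj_on (\<lambda>j. csc (odd_angle n j) ^ 2) {1..n}"
proof -
  have "inj_on (odd_angle n) {1..n}"
    by (auto simp: inj_on_def odd_angle_def)
  moreover have "inj_on (\<lambda>t. csc t ^ 2) (odd_angle n ` {1..n})"
    using inj_on_csc_sq by (rule inj_on_subset) (use odd_angle_bounds in blast)
  ultimately show ?thesis
    using comp_inj_on by (auto simp: o_def)
qed

lemma csc_odd_angle_nonzero:
  assumes "j \<in> {1..n}"
  shows "csc (odd_angle n j) \<noteq> 0"
proof -
  have "sin (odd_angle n j) > 0"
    using odd_angle_bounds[OF assms] by (auto intro: sin_gt_zero)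
  then show ?thesis
    by (simp add: csc_def)
qed

theorem mainTheorem7:
  fixes n k :: nat
  assumes "n \<ge> 1" and "k \<le> n"
  shows "elem_sym k (\<lambda>j. (csc ((2 * real j - 1) * pi / (4 * real n)))^2) {1..n}
         = real n * fact (n + k - 1) * 4 ^ k / (fact (n - k) * fact (2 * k))"
proof -
  have "coeff (even_cos_poly n) k = (-1) ^ k * elem_sym k (\<lambda>j. csc (odd_angle n j) ^ 2) {1..n}"
  proof (rule coeff_eq_elem_sym_of_inverse_roots)
    show "degree (even_cos_poly n) = card {1..n}"
      using degree_even_cos_poly[OF assms(1)] by simp
    show "coeff (even_cos_poly n) 0 = 1"
      by (simp add: even_cos_poly_def coeff_odd_cos_poly)
    show "inj_on (\<lambda>j. csc (odd_angle n j) ^ 2) {1..n}"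
      by (rule inj_on_csc_sq_odd_angle)
  qed (use assms in \<open>simp_all add: csc_odd_angle_nonzero inverse_csc_sq even_cos_poly_root_odd_angle\<close>)
  moreover have "coeff (even_cos_poly n) k
      = (-1) ^ k * (real n * fact (n + k - 1) * 4 ^ k / (fact (n - k) * fact (2 * k)))"
    using assms by (simp add: coeff_even_cos_poly)
  ultimately have "(-1) ^ k * elem_sym k (\<lambda>j. csc (odd_angle n j) ^ 2) {1..n}
      = (-1) ^ k * (real n * fact (n + k - 1) * 4 ^ k / (fact (n - k) * fact (2 * k)))"
    by simp
  then show ?thesis
    unfolding odd_angle_def by (rule mult_left_cancel[THEN iffD1, rotated]) simp
qed

end
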